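(* For every positive integer $n$, $N'(n,0,n-1)=n-1$.
   Context: $\mathbb{Z}_4$ is the ring of integers modulo $4$; a $\mathbb{Z}_4$-code of length $n$ is a $\mathbb{Z}_4$-submodule of $\mathbb{Z}_4^n$. Two codes are equivalent if one is obtained from the other by permuting coordinates and changing the signs of some coordinates. Every $\mathbb{Z}_4$-code is permutation-equivalent to one with generator matrix $\begin{pmatrix} I_{k_1} & A & B \\ O & 2I_{k_2} & 2D\end{pmatrix}$ with $A,D$ $(0,1)$-matrices and $B$ a $\mathbb{Z}_4$-matrix; the code then has type $4^{k_1}2^{k_2}$. The trivial extension of a code $C$ of length $n-1$ is $\{(c,0)\mid c\in C\}$ (the only code of length $0$ is the zero code). $N'(n,k_1,k_2)$ denotes the number of equivalence classes of $\mathbb{Z}_4$-codes of length $n$ and type $4^{k_1}2^{k_2}$ that are not equivalent to the trivial extension of any $\mathbb{Z}_4$-code of length $n-1$. *)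

theory Defs
  imports "HOL-Combinatorics.Permutations"
begin

text \<open>Words over Z4 of length n are lists of length n with entries in {0,1,2,3} (ints);
  arithmetic is taken mod 4.\<close>

definition is_word :: "nat \<Rightarrow> int list \<Rightarrow> bool" where
  "is_word n w \<longleftrightarrow> length w = n \<and> (\<forall>x\<in>set w. 0 \<le> x \<and> x < 4)"

definition word_add :: "int list \<Rightarrow> int list \<Rightarrow> int list" where
  "word_add v w = map2 (\<lambda>x y. (x + y) mod 4) v w"

definition word_smult :: "int \<Rightarrow> int list \<Rightarrow> int list" where
  "word_smult a w = map (\<lambda>x. (a * x) mod 4) w"

definition is_code :: "nat \<Rightarrow> int list set \<Rightarrow> bool" where
  "is_code n C \<longleftrightarrow> (\<forall>w\<in>C. is_word n w) \<and> replicate n 0 \<in> C \<and>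
     (\<forall>v\<in>C. \<forall>w\<in>C. word_add v w \<in> C) \<and> (\<forall>a. \<forall>w\<in>C. word_smult a w \<in> C)"

definition transform :: "nat \<Rightarrow> (nat \<Rightarrow> nat) \<Rightarrow> (nat \<Rightarrow> int) \<Rightarrow> int list \<Rightarrow> int list" where
  "transform n \<sigma> \<epsilon> w = map (\<lambda>i. (\<epsilon> i * w ! (\<sigma> i)) mod 4) [0..<n]"

definition code_equiv :: "nat \<Rightarrow> int list set \<Rightarrow> int list set \<Rightarrow> bool" where
  "code_equiv n C C' \<longleftrightarrow> (\<exists>\<sigma> \<epsilon>. \<sigma> permutes {..<n} \<and> (\<forall>i. \<epsilon> i \<in> {1, -1}) \<and>
      C' = transform n \<sigma> \<epsilon> ` C)"

definition span_code :: "nat \<Rightarrow> nat \<Rightarrow> (nat \<Rightarrow> int list) \<Rightarrow> int list set" where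
  "span_code n m r = {map (\<lambda>j. (\<Sum>i<m. c i * (r i ! j)) mod 4) [0..<n] | c. True}"

text \<open>Rows of the standard-form generator matrix
  [[I_k1, A, B], [O, 2 I_k2, 2 D]].\<close>
definition std_row :: "nat \<Rightarrow> nat \<Rightarrow> nat \<Rightarrow> (nat \<Rightarrow> nat \<Rightarrow> int) \<Rightarrow> (nat \<Rightarrow> nat \<Rightarrow> int)
    \<Rightarrow> (nat \<Rightarrow> nat \<Rightarrow> int) \<Rightarrow> nat \<Rightarrow> int list" where
  "std_row n k1 k2 A B D r = map (\<lambda>j.
     if r < k1 then
       (if j < k1 then (if j = r then 1 else 0)
        else if j < k1 + k2 then A r (j - k1) else B r (j - k1 - k2))
     else
       (if j < k1 then 0
        else if j < k1 + k2 then (if j = r then 2 else 0)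
        else 2 * D (r - k1) (j - k1 - k2))) [0..<n]"

text \<open>C has type 4^k1 2^k2: some coordinate permutation of C has a generator matrix in
  standard form with k1 rows of the first kind and k2 of the second.\<close>
definition has_type :: "nat \<Rightarrow> nat \<Rightarrow> nat \<Rightarrow> int list set \<Rightarrow> bool" where
  "has_type n k1 k2 C \<longleftrightarrow> k1 + k2 \<le> n \<and>
     (\<exists>\<sigma> A B D. \<sigma> permutes {..<n} \<and>
        (\<forall>i j. A i j \<in> {0, 1}) \<and> (\<forall>i j. D i j \<in> {0, 1}) \<and> (\<forall>i j. 0 \<le> B i j \<and> B i j < 4) \<and>
        transform n \<sigma> (\<lambda>_. 1) ` C = span_code n (k1 + k2) (std_row n k1 k2 A B D))"

definition trivial_ext :: "int list set \<Rightarrow> int list set" where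
  "trivial_ext C = {w @ [0] | w. w \<in> C}"

definition counted_codes :: "nat \<Rightarrow> nat \<Rightarrow> nat \<Rightarrow> int list set set" where
  "counted_codes n k1 k2 = {C. is_code n C \<and> has_type n k1 k2 C \<and>
      \<not> (\<exists>C'. is_code (n - 1) C' \<and> code_equiv n C (trivial_ext C'))}"

definition N' :: "nat \<Rightarrow> nat \<Rightarrow> nat \<Rightarrow> nat" where
  "N' n k1 k2 = card {{D \<in> counted_codes n k1 k2. code_equiv n C D} | C. C \<in> counted_codes n k1 k2}"

end

theory Submission
  imports Defs
begin

(* A code of type 2^(n - 1) is twice a binary code of dimension n - 1, that is, the code of
   all words 2x with x_i summing to an even number over some nonempty set U of coordinates
   (U is read off the column D of the standard form together with the last coordinate).
   Permuting coordinates permutes U and sign changes do nothing, so the equivalence class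
   of such a code is determined by |U|. For |U| = 1 the code is the trivial extension of
   the full code 2 Z_2^(n - 1); for |U| >= 2 no coordinate vanishes on the whole code, whereas
   every code equivalent to a trivial extension has such a coordinate. Hence the classes
   counted by N'(n, 0, n - 1) correspond to |U| in {2..n}. *)

definition double_word :: "nat \<Rightarrow> (nat \<Rightarrow> int) \<Rightarrow> int list" where
  "double_word n x = map (\<lambda>j. (2 * x j) mod 4) [0..<n]"

definition parity_code :: "nat \<Rightarrow> nat set \<Rightarrow> int list set" where
  "parity_code n U = {double_word n x | x. even (\<Sum>i\<in>U. x i)}"

lemma length_double_word [simp]: "length (double_word n x) = n"
  by (simp add: double_word_def)

lemma nth_double_word [simp]: "j < n \<Longrightarrow> double_word n x ! j = (2 * x j) mod 4"
  by (simp add: double_word_def)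

lemma double_word_Suc: "double_word (Suc n) x = double_word n x @ [(2 * x n) mod 4]"
  by (simp add: double_word_def)

lemma double_word_eq_iff:
  "double_word n x = double_word n y \<longleftrightarrow> (\<forall>j<n. even (x j - y j))"
proof -
  have "(2 * x j) mod 4 = (2 * y j) mod 4 \<longleftrightarrow> even (x j - y j)" for j
    by presburger
  then show ?thesis by (auto simp: list_eq_iff_nth_eq)
qed

lemma even_sum_iff_even_sum:
  fixes f g :: "'a \<Rightarrow> int"
  assumes "\<And>i. i \<in> A \<Longrightarrow> even (f i - g i)"
  shows "even (sum f A) \<longleftrightarrow> even (sum g A)"
proof -
  have "even (sum f A - sum g A)"
    using assms by (simp add: sum_subtractf[symmetric] dvd_sum)
  then show ?thesis by presburger
qed

lemma double_word_in_parity_code_iff: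
  assumes "U \<subseteq> {..<n}"
  shows "double_word n x \<in> parity_code n U \<longleftrightarrow> even (\<Sum>i\<in>U. x i)"
proof
  assume "double_word n x \<in> parity_code n U"
  then obtain y where "double_word n x = double_word n y" and "even (\<Sum>i\<in>U. y i)"
    by (auto simp: parity_code_def)
  with assms show "even (\<Sum>i\<in>U. x i)"
    by (subst even_sum_iff_even_sum[of _ _ y]) (auto simp: double_word_eq_iff)
qed (auto simp: parity_code_def)

lemma word_add_double_word:
  "word_add (double_word n x) (double_word n y) = double_word n (\<lambda>j. x j + y j)"
  by (simp add: word_add_def double_word_def list_eq_iff_nth_eq mod_add_eq)

lemma word_smult_double_word: "word_smult a (double_word n x) = double_word n (\<lambda>j. a * x j)"
  by (simp add: word_smult_def double_word_def list_eq_iff_nth_eq mod_mult_right_eq mult.left_commute)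

lemma is_code_parity_code: "is_code n (parity_code n U)"
  unfolding is_code_def
proof (intro conjI ballI allI)
  show "is_word n w" if "w \<in> parity_code n U" for w
    using that by (auto simp: parity_code_def is_word_def double_word_def)
  have "replicate n 0 = double_word n (\<lambda>_. 0)"
    by (simp add: double_word_def list_eq_iff_nth_eq)
  then show "replicate n 0 \<in> parity_code n U"
    by (auto simp: parity_code_def)
  show "word_add v w \<in> parity_code n U" if "v \<in> parity_code n U" "w \<in> parity_code n U" for v w
    using that by (auto simp: parity_code_def word_add_double_word sum.distrib)
  show "word_smult a w \<in> parity_code n U" if "w \<in> parity_code n U" for a w
    using that by (auto simp: parity_code_def word_smult_double_word simp flip: sum_distrib_left)
qed

lemma transform_double_word:
  assumes "\<sigma> permutes {..<n}"
  shows "transform n \<sigma> \<epsilon> (double_word n x) = double_word n (\<lambda>i. \<epsilon> i * x (\<sigma> i))"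
proof -
  have "\<sigma> i < n" if "i < n" for i
    using permutes_in_image[OF assms] that by simp
  then show ?thesis
    by (simp add: transform_def double_word_def mod_mult_right_eq mult.left_commute)
qed

lemma transform_parity_code_subset:
  assumes \<sigma>: "\<sigma> permutes {..<n}" and \<epsilon>: "\<forall>i. \<epsilon> i \<in> {1, -1}"
  shows "transform n \<sigma> \<epsilon> ` parity_code n U \<subseteq> parity_code n (inv \<sigma> ` U)"
proof
  fix w assume "w \<in> transform n \<sigma> \<epsilon> ` parity_code n U"
  then obtain x where w: "w = double_word n (\<lambda>i. \<epsilon> i * x (\<sigma> i))" and x: "even (\<Sum>i\<in>U. x i)"
    by (auto simp: parity_code_def transform_double_word[OF \<sigma>])
  have "(\<Sum>i\<in>inv \<sigma> ` U. x (\<sigma> i)) = (\<Sum>i\<in>U. x i)"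
    using permutes_inj[OF permutes_inv[OF \<sigma>]] permutes_inverses(1)[OF \<sigma>]
    by (simp add: sum.reindex inj_on_subset)
  moreover have "even (\<Sum>i\<in>inv \<sigma> ` U. \<epsilon> i * x (\<sigma> i))
      \<longleftrightarrow> even (\<Sum>i\<in>inv \<sigma> ` U. x (\<sigma> i))"
  proof (rule even_sum_iff_even_sum)
    fix i
    have "\<epsilon> i = 1 \<or> \<epsilon> i = -1"
      using \<epsilon> by simp
    then show "even (\<epsilon> i * x (\<sigma> i) - x (\<sigma> i))"
      by (elim disjE) (simp_all add: diff_conv_add_uminus[symmetric])
  qed
  ultimately have "even (\<Sum>i\<in>inv \<sigma> ` U. \<epsilon> i * x (\<sigma> i))"
    using x by simp
  then show "w \<in> parity_code n (inv \<sigma> ` U)"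
    by (auto simp: parity_code_def w)
qed

lemma transform_parity_code:
  assumes \<sigma>: "\<sigma> permutes {..<n}" and \<epsilon>: "\<forall>i. \<epsilon> i \<in> {1, -1}"
  shows "transform n \<sigma> \<epsilon> ` parity_code n U = parity_code n (inv \<sigma> ` U)"
proof
  show "parity_code n (inv \<sigma> ` U) \<subseteq> transform n \<sigma> \<epsilon> ` parity_code n U"
  proof
    fix w assume w: "w \<in> parity_code n (inv \<sigma> ` U)"
    let ?\<epsilon>' = "\<epsilon> \<circ> inv \<sigma>"
    have \<sigma>': "inv \<sigma> permutes {..<n}"
      using permutes_inv[OF \<sigma>] .
    have "transform n (inv \<sigma>) ?\<epsilon>' w \<in> parity_code n (inv (inv \<sigma>) ` inv \<sigma> ` U)"
      using transform_parity_code_subset[OF \<sigma>', of ?\<epsilon>'] \<epsilon> w by auto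
    moreover have "inv (inv \<sigma>) ` inv \<sigma> ` U = U"
      using permutes_inv_inv[OF \<sigma>] permutes_inverses(1)[OF \<sigma>] by (simp add: image_image)
    moreover have "transform n \<sigma> \<epsilon> (transform n (inv \<sigma>) ?\<epsilon>' w) = w"
    proof -
      obtain x where x: "w = double_word n x"
        using w by (auto simp: parity_code_def)
      have sign_square: "\<epsilon> i * (\<epsilon> i * y) = y" for i y
        using \<epsilon>[rule_format, of i] by auto
      show ?thesis
        by (simp add: sign_square x transform_double_word[OF \<sigma>] transform_double_word[OF \<sigma>']
            permutes_inverses(2)[OF \<sigma>])
    qed
    ultimately show "w \<in> transform n \<sigma> \<epsilon> ` parity_code n U"
      by (metis image_eqI)
  qed
qed (rule transform_parity_code_subset[OF assms])

definition parity_support :: "nat \<Rightarrow> int list set \<Rightarrow> nat set" where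
  "parity_support n C = {k. k < n \<and> double_word n (\<lambda>i. of_bool (i = k)) \<notin> C}"

lemma parity_support_parity_code:
  assumes "U \<subseteq> {..<n}"
  shows "parity_support n (parity_code n U) = U"
proof -
  have "(\<Sum>i\<in>U. of_bool (i = k) :: int) = of_bool (k \<in> U)" for k
    using finite_subset[OF assms] by (simp add: of_bool_def sum.delta)
  then show ?thesis
    using assms by (auto simp: parity_support_def double_word_in_parity_code_iff)
qed

lemma exists_permutes_image:
  assumes "U \<subseteq> A" "V \<subseteq> A" "finite A" "card U = card V"
  shows "\<exists>\<sigma>. \<sigma> permutes A \<and> \<sigma> ` U = V"
proof -
  have fin: "finite U" "finite V"
    using assms finite_subset by auto
  obtain f where f: "bij_betw f U V"
    using finite_same_card_bij[OF fin] assms(4) by blast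
  have "card (A - U) = card (A - V)"
    using assms fin by (simp add: card_Diff_subset)
  then obtain g where g: "bij_betw g (A - U) (A - V)"
    using finite_same_card_bij assms(3) by blast
  define \<sigma> where "\<sigma> x = (if x \<in> U then f x else if x \<in> A then g x else x)" for x
  have "bij_betw \<sigma> U V"
    using f by (rule bij_betw_cong[THEN iffD1, rotated]) (simp add: \<sigma>_def)
  moreover have "bij_betw \<sigma> (A - U) (A - V)"
    using g by (rule bij_betw_cong[THEN iffD1, rotated]) (simp add: \<sigma>_def)
  ultimately have "bij_betw \<sigma> (U \<union> (A - U)) (V \<union> (A - V))"
    by (rule bij_betw_combine) auto
  then have "\<sigma> permutes A"
    using assms(1,2) by (intro bij_imp_permutes) (auto simp: \<sigma>_def Un_absorb1)
  moreover have "\<sigma> ` U = V"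
    using \<open>bij_betw \<sigma> U V\<close> by (simp add: bij_betw_def)
  ultimately show ?thesis by blast
qed

lemma code_equiv_parity_code_iff:
  assumes U: "U \<subseteq> {..<n}" and V: "V \<subseteq> {..<n}"
  shows "code_equiv n (parity_code n U) (parity_code n V) \<longleftrightarrow> card U = card V"
proof
  assume "code_equiv n (parity_code n U) (parity_code n V)"
  then obtain \<sigma> \<epsilon> where \<sigma>: "\<sigma> permutes {..<n}" and "\<forall>i. \<epsilon> i \<in> {1, -1}"
    and "parity_code n V = transform n \<sigma> \<epsilon> ` parity_code n U"
    by (auto simp: code_equiv_def)
  then have "parity_code n V = parity_code n (inv \<sigma> ` U)"
    by (simp add: transform_parity_code)
  moreover have "inv \<sigma> ` U \<subseteq> {..<n}"
    using U permutes_in_image[OF permutes_inv[OF \<sigma>]] by auto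
  ultimately have "V = inv \<sigma> ` U"
    using V by (metis parity_support_parity_code)
  then show "card U = card V"
    using permutes_inj[OF permutes_inv[OF \<sigma>]] by (simp add: card_image inj_on_subset)
next
  assume "card U = card V"
  then obtain \<tau> where \<tau>: "\<tau> permutes {..<n}" and "\<tau> ` V = U"
    using exists_permutes_image[OF V U] by (metis finite_lessThan)
  then have "inv \<tau> ` U = V"
    using permutes_inverses(2)[OF \<tau>] by (auto simp: image_image)
  then have "parity_code n V = transform n \<tau> (\<lambda>_. 1) ` parity_code n U"
    by (simp add: transform_parity_code[OF \<tau>])
  then show "code_equiv n (parity_code n U) (parity_code n V)"
    using \<tau> by (auto simp: code_equiv_def)
qed

lemma std_row_combination:
  assumes "j < n"
  shows "(\<Sum>i<n - 1. c i * (std_row n 0 (n - 1) A B D i ! j))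
       = 2 * (if j < n - 1 then c j else \<Sum>i<n - 1. c i * D i 0)"
proof (cases "j < n - 1")
  case True
  then have "(\<Sum>i<n - 1. c i * (std_row n 0 (n - 1) A B D i ! j)) = (\<Sum>i<n - 1. if i = j then 2 * c i else 0)"
    using assms by (intro sum.cong) (auto simp: std_row_def)
  with True show ?thesis by simp
next
  case False
  with assms show ?thesis
    by (simp add: std_row_def sum_distrib_left mult.left_commute)
qed

lemma span_std_row_eq_parity_code:
  fixes n :: nat
  assumes D: "\<forall>i j. D i j \<in> {0, 1}"
  defines "W \<equiv> {i. i < n - 1 \<and> D i 0 = 1}"
  shows "span_code n (n - 1) (std_row n 0 (n - 1) A B D) = parity_code n (insert (n - 1) W)"
proof -
  have column_sum: "(\<Sum>i<n - 1. c i * D i 0) = (\<Sum>i\<in>W. c i)" for c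
  proof -
    have "(\<Sum>i<n - 1. c i * D i 0) = (\<Sum>i<n - 1. if D i 0 = 1 then c i else 0)"
      using D by (intro sum.cong) auto
    then show ?thesis
      by (simp add: sum.inter_filter[symmetric] W_def lessThan_def conj_commute)
  qed
  have "map (\<lambda>j. (\<Sum>i<n - 1. c i * (std_row n 0 (n - 1) A B D i ! j)) mod 4) [0..<n]
      = double_word n (\<lambda>j. if j < n - 1 then c j else \<Sum>i\<in>W. c i)" for c
    unfolding double_word_def
    by (rule map_cong[OF refl]) (use std_row_combination column_sum in simp)
  then have span: "span_code n (n - 1) (std_row n 0 (n - 1) A B D)
      = {double_word n (\<lambda>j. if j < n - 1 then c j else \<Sum>i\<in>W. c i) | c. True}"
    by (simp add: span_code_def)
  have W: "finite W" "n - 1 \<notin> W" "W \<subseteq> {..<n - 1}"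
    by (auto simp: W_def)
  show ?thesis
    unfolding span
  proof (intro equalityI subsetI)
    fix w assume "w \<in> {double_word n (\<lambda>j. if j < n - 1 then c j else \<Sum>i\<in>W. c i) | c. True}"
    then obtain c where w: "w = double_word n (\<lambda>j. if j < n - 1 then c j else \<Sum>i\<in>W. c i)"
      by blast
    have "(\<Sum>i\<in>insert (n - 1) W. if i < n - 1 then c i else \<Sum>i\<in>W. c i) = 2 * (\<Sum>i\<in>W. c i)"
      using W by (auto intro!: sum.cong)
    then show "w \<in> parity_code n (insert (n - 1) W)"
      unfolding parity_code_def w by auto
  next
    fix w assume "w \<in> parity_code n (insert (n - 1) W)"
    then obtain x where w: "w = double_word n x" and x: "even (x (n - 1) + (\<Sum>i\<in>W. x i))"
      using W by (auto simp: parity_code_def)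
    have "even (x j - (if j < n - 1 then x j else \<Sum>i\<in>W. x i))" if "j < n" for j
    proof -
      have "j < n - 1 \<or> j = n - 1"
        using that by arith
      then show ?thesis
        using x by (elim disjE) (simp, presburger)
    qed
    then have "w = double_word n (\<lambda>j. if j < n - 1 then x j else \<Sum>i\<in>W. x i)"
      by (simp add: w double_word_eq_iff)
    then show "w \<in> {double_word n (\<lambda>j. if j < n - 1 then c j else \<Sum>i\<in>W. c i) | c. True}"
      by blast
  qed
qed

lemma transform_inv_transform:
  assumes \<sigma>: "\<sigma> permutes {..<n}" and w: "is_word n w"
  shows "transform n (inv \<sigma>) (\<lambda>_. 1) (transform n \<sigma> (\<lambda>_. 1) w) = w"
proof (rule nth_equalityI)
  show "length (transform n (inv \<sigma>) (\<lambda>_. 1) (transform n \<sigma> (\<lambda>_. 1) w)) = length w"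
    using w by (simp add: transform_def is_word_def)
next
  fix i assume "i < length (transform n (inv \<sigma>) (\<lambda>_. 1) (transform n \<sigma> (\<lambda>_. 1) w))"
  then have i: "i < n"
    by (simp add: transform_def)
  then have "inv \<sigma> i < n" "0 \<le> w ! i \<and> w ! i < 4"
    using permutes_in_image[OF permutes_inv[OF \<sigma>]] w by (auto simp: is_word_def)
  with i show "transform n (inv \<sigma>) (\<lambda>_. 1) (transform n \<sigma> (\<lambda>_. 1) w) ! i = w ! i"
    by (simp add: transform_def permutes_inverses(1)[OF \<sigma>])
qed

lemma has_type_2_iff_parity_code:
  assumes n: "1 \<le> n" and C: "is_code n C"
  shows "has_type n 0 (n - 1) C \<longleftrightarrow> (\<exists>U. U \<subseteq> {..<n} \<and> U \<noteq> {} \<and> C = parity_code n U)"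
proof
  assume "has_type n 0 (n - 1) C"
  then obtain \<sigma> A B D where \<sigma>: "\<sigma> permutes {..<n}" and D: "\<forall>i j. D i j \<in> {0, 1}"
    and span: "transform n \<sigma> (\<lambda>_. 1) ` C = span_code n (n - 1) (std_row n 0 (n - 1) A B D)"
    by (auto simp: has_type_def)
  define U where "U = insert (n - 1) {i. i < n - 1 \<and> D i 0 = 1}"
  have U: "U \<subseteq> {..<n}"
    using n by (auto simp: U_def)
  have "C = transform n (inv \<sigma>) (\<lambda>_. 1) ` transform n \<sigma> (\<lambda>_. 1) ` C"
    using transform_inv_transform[OF \<sigma>] C by (force simp: is_code_def image_image)
  also have "\<dots> = parity_code n (\<sigma> ` U)"
    using span span_std_row_eq_parity_code[OF D] transform_parity_code[OF permutes_inv[OF \<sigma>]]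
    by (simp add: U_def permutes_inv_inv[OF \<sigma>])
  finally show "\<exists>U. U \<subseteq> {..<n} \<and> U \<noteq> {} \<and> C = parity_code n U"
    using U permutes_in_image[OF \<sigma>] by (intro exI[of _ "\<sigma> ` U"]) (auto simp: U_def)
next
  assume "\<exists>U. U \<subseteq> {..<n} \<and> U \<noteq> {} \<and> C = parity_code n U"
  then obtain U where U: "U \<subseteq> {..<n}" "U \<noteq> {}" and C: "C = parity_code n U"
    by blast
  define m where "m = card U"
  have m: "1 \<le> m" "m \<le> n"
    using U finite_subset[OF U(1)] card_mono[OF _ U(1)] by (auto simp: m_def Suc_le_eq card_gt_0_iff)
  \<comment> \<open>Setting D i 0 = 1 on the last m - 1 rows puts the parity check on the last m coordinates.\<close>
  define D :: "nat \<Rightarrow> nat \<Rightarrow> int" where "D i j = of_bool (n - m \<le> i)" for i j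
  have last_m: "insert (n - 1) {i. i < n - 1 \<and> D i 0 = 1} = {n - m..<n}"
    using m by (auto simp: D_def)
  obtain \<sigma> where \<sigma>: "\<sigma> permutes {..<n}" and "\<sigma> ` {n - m..<n} = U"
  proof -
    have "{n - m..<n} \<subseteq> {..<n}" "card {n - m..<n} = card U"
      using m by (auto simp: m_def)
    then show ?thesis
      using exists_permutes_image[of "{n - m..<n}" "{..<n}" U] U(1) that by blast
  qed
  then have "inv \<sigma> ` U = {n - m..<n}"
    using permutes_inverses(2)[OF \<sigma>] by (auto simp: image_image)
  then have "transform n \<sigma> (\<lambda>_. 1) ` C
      = span_code n (n - 1) (std_row n 0 (n - 1) (\<lambda>_ _. 0) (\<lambda>_ _. 0) D)"
    using span_std_row_eq_parity_code[of D] last_m by (simp add: C transform_parity_code[OF \<sigma>] D_def)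
  then show "has_type n 0 (n - 1) C"
    unfolding has_type_def using \<sigma>
    by (intro conjI exI[of _ \<sigma>] exI[of _ "\<lambda>_ _. 0"] exI[of _ D]) (auto simp: D_def)
qed

lemma trivial_ext_parity_code_empty: "trivial_ext (parity_code n {}) = parity_code (Suc n) {n}"
proof (intro equalityI subsetI)
  fix w assume "w \<in> trivial_ext (parity_code n {})"
  then obtain x where w: "w = double_word n x @ [0]"
    by (auto simp: trivial_ext_def parity_code_def)
  have "double_word n x = double_word n (x(n := 0))"
    by (simp add: double_word_eq_iff)
  then have "w = double_word (Suc n) (x(n := 0))"
    by (simp add: w double_word_Suc)
  then show "w \<in> parity_code (Suc n) {n}"
    by (auto simp: parity_code_def)
next
  fix w assume "w \<in> parity_code (Suc n) {n}"
  then obtain x where "w = double_word (Suc n) x" and "even (x n)"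
    by (auto simp: parity_code_def)
  then have "w = double_word n x @ [0]"
    by (auto simp: double_word_Suc)
  then show "w \<in> trivial_ext (parity_code n {})"
    by (auto simp: trivial_ext_def parity_code_def)
qed

lemma code_equiv_trivial_ext_zero_coordinate:
  assumes n: "1 \<le> n" and C: "\<forall>w\<in>C. is_word n w" and C': "\<forall>u\<in>C'. length u = n - 1"
    and equiv: "code_equiv n C (trivial_ext C')"
  shows "\<exists>k<n. \<forall>w\<in>C. w ! k = 0"
proof -
  obtain \<sigma> \<epsilon> where \<sigma>: "\<sigma> permutes {..<n}" and \<epsilon>: "\<forall>i. \<epsilon> i \<in> {1, -1}"
    and ext: "trivial_ext C' = transform n \<sigma> \<epsilon> ` C"
    using equiv by (auto simp: code_equiv_def)
  let ?k = "\<sigma> (n - 1)"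
  have k: "?k < n"
    using permutes_in_image[OF \<sigma>, of "n - 1"] n by simp
  have "w ! ?k = 0" if w: "w \<in> C" for w
  proof -
    have "transform n \<sigma> \<epsilon> w \<in> trivial_ext C'"
      using ext w by blast
    then obtain u where "transform n \<sigma> \<epsilon> w = u @ [0]" and "length u = n - 1"
      using C' by (auto simp: trivial_ext_def)
    then have "transform n \<sigma> \<epsilon> w ! (n - 1) = 0"
      by (metis nth_append_length)
    then have "(\<epsilon> (n - 1) * w ! ?k) mod 4 = 0"
      using n by (simp add: transform_def)
    moreover have "0 \<le> w ! ?k" "w ! ?k < 4"
      using C w k by (auto simp: is_word_def)
    moreover have "\<epsilon> (n - 1) = 1 \<or> \<epsilon> (n - 1) = -1"
      using \<epsilon> by simp
    ultimately show ?thesis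
      by auto presburger
  qed
  with k show ?thesis by blast
qed

lemma parity_code_no_zero_coordinate:
  assumes U: "2 \<le> card U" and k: "k < n"
  shows "\<exists>w\<in>parity_code n U. w ! k \<noteq> 0"
proof -
  have fin: "finite U"
    using U card.infinite by fastforce
  have "U - {k} \<noteq> {}"
    using U card_mono[of "{k}" U] by force
  then obtain j where j: "j \<in> U" "j \<noteq> k"
    by blast
  obtain x :: "nat \<Rightarrow> int" where "even (\<Sum>i\<in>U. x i)" "x k = 1"
  proof (cases "k \<in> U")
    case True
    have "(\<Sum>i\<in>U. of_bool (i = k) + of_bool (i = j) :: int) = 2"
      using True j fin by (simp add: sum.distrib of_bool_def sum.delta)
    then show ?thesis
      using j by (intro that[of "\<lambda>i. of_bool (i = k) + of_bool (i = j)"]) simp_all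
  next
    case False
    have "(\<Sum>i\<in>U. of_bool (i = k) :: int) = 0"
      using False by (intro sum.neutral) auto
    then show ?thesis
      by (intro that[of "\<lambda>i. of_bool (i = k)"]) simp_all
  qed
  then show ?thesis
    using k by (intro bexI[of _ "double_word n x"]) (auto simp: parity_code_def)
qed

lemma counted_codes_type_2_iff:
  assumes n: "1 \<le> n"
  shows "C \<in> counted_codes n 0 (n - 1)
    \<longleftrightarrow> (\<exists>U. U \<subseteq> {..<n} \<and> 2 \<le> card U \<and> C = parity_code n U)"
proof
  assume "C \<in> counted_codes n 0 (n - 1)"
  then have C: "is_code n C" "has_type n 0 (n - 1) C"
    and nontrivial: "\<not> (\<exists>C'. is_code (n - 1) C' \<and> code_equiv n C (trivial_ext C'))"
    unfolding counted_codes_def by blast+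
  obtain U where U: "U \<subseteq> {..<n}" "U \<noteq> {}" and C_eq: "C = parity_code n U"
    using has_type_2_iff_parity_code[OF n C(1)] C(2) by blast
  have "card U \<noteq> 1"
  proof
    assume "card U = 1"
    then have "code_equiv n C (parity_code n {n - 1})"
      using n U code_equiv_parity_code_iff[of U n "{n - 1}"] by (simp add: C_eq)
    moreover have "parity_code n {n - 1} = trivial_ext (parity_code (n - 1) {})"
      using n trivial_ext_parity_code_empty[of "n - 1"] by simp
    ultimately show False
      using nontrivial is_code_parity_code by metis
  qed
  moreover have "card U \<noteq> 0"
    using U finite_subset[OF U(1)] by simp
  ultimately show "\<exists>U. U \<subseteq> {..<n} \<and> 2 \<le> card U \<and> C = parity_code n U"
    using U C_eq by (intro exI[of _ U]) auto
next
  assume "\<exists>U. U \<subseteq> {..<n} \<and> 2 \<le> card U \<and> C = parity_code n U"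
  then obtain U where U: "U \<subseteq> {..<n}" "2 \<le> card U" and C: "C = parity_code n U"
    by blast
  have "\<not> code_equiv n C (trivial_ext C')" if C': "is_code (n - 1) C'" for C'
  proof
    assume "code_equiv n C (trivial_ext C')"
    moreover have "\<forall>w\<in>C. is_word n w" "\<forall>u\<in>C'. length u = n - 1"
      using C' is_code_parity_code[of n U] unfolding C is_code_def is_word_def by blast+
    ultimately obtain k where "k < n" "\<forall>w\<in>C. w ! k = 0"
      using code_equiv_trivial_ext_zero_coordinate[OF n] by blast
    then show False
      using parity_code_no_zero_coordinate[OF U(2)] C by blast
  qed
  moreover have "U \<noteq> {}"
    using U(2) by auto
  then have "has_type n 0 (n - 1) C"
    using has_type_2_iff_parity_code[OF n is_code_parity_code] U(1) C by blast
  ultimately show "C \<in> counted_codes n 0 (n - 1)"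
    unfolding counted_codes_def using C is_code_parity_code by blast
qed

lemma card_classes_eq_card_image:
  assumes "\<And>x y. x \<in> S \<Longrightarrow> y \<in> S \<Longrightarrow> R x y \<longleftrightarrow> f x = f y"
  shows "card {{y \<in> S. R x y} | x. x \<in> S} = card (f ` S)"
proof -
  let ?fibre = "\<lambda>v. {y \<in> S. f y = v}"
  have "{y \<in> S. R x y} = ?fibre (f x)" if "x \<in> S" for x
    using assms that by auto
  then have "{{y \<in> S. R x y} | x. x \<in> S} = ?fibre ` f ` S"
    by (auto simp: image_image)
  moreover have "inj_on ?fibre (f ` S)"
    by (rule inj_onI) blast
  ultimately show ?thesis
    by (simp add: card_image)
qed

lemma code_equiv_counted_codes_iff:
  assumes n: "1 \<le> n" and C: "C \<in> counted_codes n 0 (n - 1)" and D: "D \<in> counted_codes n 0 (n - 1)"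
  shows "code_equiv n C D \<longleftrightarrow> card (parity_support n C) = card (parity_support n D)"
proof -
  obtain U where "U \<subseteq> {..<n}" "C = parity_code n U"
    using counted_codes_type_2_iff[OF n, THEN iffD1, OF C] by blast
  moreover obtain V where "V \<subseteq> {..<n}" "D = parity_code n V"
    using counted_codes_type_2_iff[OF n, THEN iffD1, OF D] by blast
  ultimately show ?thesis
    by (simp add: code_equiv_parity_code_iff parity_support_parity_code)
qed

lemma card_parity_support_counted_codes:
  assumes n: "1 \<le> n"
  shows "(\<lambda>C. card (parity_support n C)) ` counted_codes n 0 (n - 1) = {2..n}"
proof (intro equalityI subsetI)
  fix m assume "m \<in> (\<lambda>C. card (parity_support n C)) ` counted_codes n 0 (n - 1)"
  then obtain C where C: "C \<in> counted_codes n 0 (n - 1)" and m: "m = card (parity_support n C)"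
    by blast
  obtain U where "U \<subseteq> {..<n}" "2 \<le> card U" "C = parity_code n U"
    using counted_codes_type_2_iff[OF n, THEN iffD1, OF C] by blast
  then show "m \<in> {2..n}"
    using card_mono[of "{..<n}" U] by (simp add: m parity_support_parity_code)
next
  fix m assume m: "m \<in> {2..n}"
  then have "{..<m} \<subseteq> {..<n}" "2 \<le> card {..<m}"
    by auto
  then have "parity_code n {..<m} \<in> counted_codes n 0 (n - 1)"
    using counted_codes_type_2_iff[OF n, THEN iffD2] by blast
  moreover have "card (parity_support n (parity_code n {..<m})) = m"
    using m by (simp add: parity_support_parity_code)
  ultimately show "m \<in> (\<lambda>C. card (parity_support n C)) ` counted_codes n 0 (n - 1)"
    by (metis image_eqI)
qed

theorem mainTheorem7:
  fixes n :: nat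
  assumes "n \<ge> 1"
  shows "N' n 0 (n - 1) = n - 1"
proof -
  have "N' n 0 (n - 1) = card ((\<lambda>C. card (parity_support n C)) ` counted_codes n 0 (n - 1))"
    unfolding N'_def
    by (rule card_classes_eq_card_image) (rule code_equiv_counted_codes_iff[OF assms])
  also have "\<dots> = card {2..n}"
    unfolding card_parity_support_counted_codes[OF assms] ..
  finally show ?thesis
    by simp
qed

end
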